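(* Let $X_1,\dots,X_n$ be features and $Y$ a target that is not a.s. constant, $\mathcal{F}=\{1,\dots,n\}$, and $i\in\mathcal{F}$. Then $\mathrm{FI}(i)=0$ if and only if $\mathrm{Dep}(S\cup\{i\},Y)=\mathrm{Dep}(S,Y)$ for all $S\subseteq\mathcal{F}\setminus\{i\}$.
   Context: All random variables are discrete with finite support and defined on a common probability space. For discrete random variables (or random vectors) $X$ and $Y$, define $$\mathrm{UD}(X,Y):=\sum_x p_X(x)\sum_y \bigl|p_{Y\mid X=x}(y)-p_Y(y)\bigr|,$$ and, when $Y$ is not almost surely constant, $\mathrm{Dep}(X,Y):=\mathrm{UD}(X,Y)/\mathrm{UD}(Y,Y)$. Given features $X_1,\dots,X_n$ with index set $\mathcal{F}=\{1,\dots,n\}$ and $S\subseteq\mathcal{F}$, write $X_S=(X_i)_{i\in S}$ ($X_\emptyset$ constant) and $\mathrm{Dep}(S,Y):=\mathrm{Dep}(X_S,Y)$. The Berkelmans–Pries feature importance is $$\mathrm{FI}(i):=\sum_{S\subseteq\mathcal{F}\setminus\{i\}}\frac{|S|!\,(n-|S|-1)!}{n!}\bigl(\mathrm{Dep}(S\cup\{i\},Y)-\mathrm{Dep}(S,Y)\bigr).$$ *)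

theory Defs
  imports "HOL-Probability.Probability"
begin

text \<open>Random variables are functions on the sample space of a probability mass
function M (a discrete probability space). Probabilities of events are
measure_pmf.prob M.\<close>

definition Pr :: "'w pmf \<Rightarrow> ('w \<Rightarrow> bool) \<Rightarrow> real" where
  "Pr M P = measure_pmf.prob M {w. P w}"

definition UD :: "'w pmf \<Rightarrow> ('w \<Rightarrow> 'a) \<Rightarrow> ('w \<Rightarrow> 'b) \<Rightarrow> real" where
  "UD M A B = (\<Sum>x\<in>A ` set_pmf M. Pr M (\<lambda>w. A w = x) *
      (\<Sum>y\<in>B ` set_pmf M.
         \<bar>Pr M (\<lambda>w. A w = x \<and> B w = y) / Pr M (\<lambda>w. A w = x) - Pr M (\<lambda>w. B w = y)\<bar>))"

definition Dep :: "'w pmf \<Rightarrow> ('w \<Rightarrow> 'a) \<Rightarrow> ('w \<Rightarrow> 'b) \<Rightarrow> real" where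
  "Dep M A B = UD M A B / UD M B B"

definition featvec :: "(nat \<Rightarrow> 'w \<Rightarrow> 'v) \<Rightarrow> nat set \<Rightarrow> 'w \<Rightarrow> (nat \<Rightarrow> 'v)" where
  "featvec X S = (\<lambda>w. restrict (\<lambda>i. X i w) S)"

definition DepS :: "'w pmf \<Rightarrow> (nat \<Rightarrow> 'w \<Rightarrow> 'v) \<Rightarrow> nat set \<Rightarrow> ('w \<Rightarrow> 'y) \<Rightarrow> real" where
  "DepS M X S Y = Dep M (featvec X S) Y"

definition FI :: "'w pmf \<Rightarrow> nat \<Rightarrow> (nat \<Rightarrow> 'w \<Rightarrow> 'v) \<Rightarrow> ('w \<Rightarrow> 'y) \<Rightarrow> nat \<Rightarrow> real" where
  "FI M n X Y i = (\<Sum>S\<in>Pow ({1..n} - {i}).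
      (fact (card S) * fact (n - card S - 1) / fact n) *
      (DepS M X (S \<union> {i}) Y - DepS M X S Y))"

end

theory Submission imports Defs begin

text \<open>The dependency measure cannot increase when the explanatory variable is
coarsened: writing UD as the sum of the absolute deviations of the joint law from
the product law, coarsening merges terms, and the triangle inequality applies.
Since X_S is a coarsening of X_T for S \<subseteq> T, every marginal contribution in FI
is nonnegative, and a sum of nonnegative terms with positive weights vanishes
exactly when every term does.\<close>

lemma Pr_comp_eq_sum:
  assumes "finite (B ` set_pmf M)"
  shows "Pr M (\<lambda>w. f (B w) = x \<and> P w) =
         (\<Sum>b\<in>{b\<in>B ` set_pmf M. f b = x}. Pr M (\<lambda>w. B w = b \<and> P w))"
proof -
  let ?S = "set_pmf M"
  have partition: "{w. f (B w) = x \<and> P w} \<inter> ?S =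
      (\<Union>b\<in>{b\<in>B ` ?S. f b = x}. {w. B w = b \<and> P w} \<inter> ?S)"
    by auto
  have "Pr M (\<lambda>w. f (B w) = x \<and> P w) = measure_pmf.prob M ({w. f (B w) = x \<and> P w} \<inter> ?S)"
    unfolding Pr_def by (simp add: measure_Int_set_pmf)
  also have "\<dots> = (\<Sum>b\<in>{b\<in>B ` ?S. f b = x}. measure_pmf.prob M ({w. B w = b \<and> P w} \<inter> ?S))"
    unfolding partition
    by (rule measure_pmf.finite_measure_finite_Union)
       (use assms in \<open>auto simp: disjoint_family_on_def\<close>)
  also have "\<dots> = (\<Sum>b\<in>{b\<in>B ` ?S. f b = x}. Pr M (\<lambda>w. B w = b \<and> P w))"
    unfolding Pr_def by (simp add: measure_Int_set_pmf)
  finally show ?thesis .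
qed

lemma UD_eq_sum_abs_joint_minus_product:
  "UD M A Y = (\<Sum>x\<in>A ` set_pmf M. \<Sum>y\<in>Y ` set_pmf M.
      \<bar>Pr M (\<lambda>w. A w = x \<and> Y w = y) - Pr M (\<lambda>w. A w = x) * Pr M (\<lambda>w. Y w = y)\<bar>)"
  unfolding UD_def
proof (rule sum.cong[OF refl])
  fix x assume "x \<in> A ` set_pmf M"
  then obtain w0 where "w0 \<in> set_pmf M" "x = A w0" by auto
  then have pos: "Pr M (\<lambda>w. A w = x) > 0"
    unfolding Pr_def by (auto intro: measure_pmf_posI)
  have "Pr M (\<lambda>w. A w = x) * \<bar>a / Pr M (\<lambda>w. A w = x) - b\<bar> = \<bar>a - Pr M (\<lambda>w. A w = x) * b\<bar>"
    for a b
  proof -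
    have "Pr M (\<lambda>w. A w = x) * \<bar>a / Pr M (\<lambda>w. A w = x) - b\<bar> =
        \<bar>Pr M (\<lambda>w. A w = x) * (a / Pr M (\<lambda>w. A w = x) - b)\<bar>"
      using pos by (simp add: abs_mult)
    also have "\<dots> = \<bar>a - Pr M (\<lambda>w. A w = x) * b\<bar>"
      using pos by (simp add: right_diff_distrib)
    finally show ?thesis .
  qed
  then show "Pr M (\<lambda>w. A w = x) * (\<Sum>y\<in>Y ` set_pmf M.
        \<bar>Pr M (\<lambda>w. A w = x \<and> Y w = y) / Pr M (\<lambda>w. A w = x) - Pr M (\<lambda>w. Y w = y)\<bar>)
     = (\<Sum>y\<in>Y ` set_pmf M.
        \<bar>Pr M (\<lambda>w. A w = x \<and> Y w = y) - Pr M (\<lambda>w. A w = x) * Pr M (\<lambda>w. Y w = y)\<bar>)"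
    by (simp add: sum_distrib_left)
qed

lemma UD_comp_le:
  assumes finB: "finite (B ` set_pmf M)"
  shows "UD M (\<lambda>w. f (B w)) Y \<le> UD M B Y"
proof -
  let ?S = "set_pmf M"
  let ?dev = "\<lambda>b y. Pr M (\<lambda>w. B w = b \<and> Y w = y) - Pr M (\<lambda>w. B w = b) * Pr M (\<lambda>w. Y w = y)"
  have image: "(\<lambda>w. f (B w)) ` ?S = f ` (B ` ?S)" by auto
  have dev_comp: "Pr M (\<lambda>w. f (B w) = x \<and> Y w = y) - Pr M (\<lambda>w. f (B w) = x) * Pr M (\<lambda>w. Y w = y)
      = (\<Sum>b\<in>{b\<in>B ` ?S. f b = x}. ?dev b y)" for x y
    using Pr_comp_eq_sum[OF finB, of f x "\<lambda>_. True"]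
    by (simp add: Pr_comp_eq_sum[OF finB, of f x "\<lambda>w. Y w = y"] sum_subtractf sum_distrib_right)
  have "UD M (\<lambda>w. f (B w)) Y =
      (\<Sum>x\<in>f ` (B ` ?S). \<Sum>y\<in>Y ` ?S. \<bar>\<Sum>b\<in>{b\<in>B ` ?S. f b = x}. ?dev b y\<bar>)"
    unfolding UD_eq_sum_abs_joint_minus_product image dev_comp ..
  also have "\<dots> \<le> (\<Sum>x\<in>f ` (B ` ?S). \<Sum>y\<in>Y ` ?S. \<Sum>b\<in>{b\<in>B ` ?S. f b = x}. \<bar>?dev b y\<bar>)"
    by (intro sum_mono sum_abs)
  also have "\<dots> = (\<Sum>x\<in>f ` (B ` ?S). \<Sum>b\<in>{b\<in>B ` ?S. f b = x}. \<Sum>y\<in>Y ` ?S. \<bar>?dev b y\<bar>)"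
    by (intro sum.cong refl sum.swap)
  also have "\<dots> = (\<Sum>b\<in>B ` ?S. \<Sum>y\<in>Y ` ?S. \<bar>?dev b y\<bar>)"
    by (rule sum.group) (use finB in auto)
  also have "\<dots> = UD M B Y"
    unfolding UD_eq_sum_abs_joint_minus_product ..
  finally show ?thesis .
qed

lemma UD_nonneg: "UD M A B \<ge> 0"
  unfolding UD_def Pr_def by (intro sum_nonneg mult_nonneg_nonneg) auto

lemma Dep_comp_le:
  assumes "finite (B ` set_pmf M)"
  shows "Dep M (\<lambda>w. f (B w)) Y \<le> Dep M B Y"
  unfolding Dep_def by (intro divide_right_mono UD_comp_le UD_nonneg assms)

lemma finite_featvec_image:
  assumes "finite T" and "\<And>j. j \<in> T \<Longrightarrow> finite (X j ` set_pmf M)"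
  shows "finite (featvec X T ` set_pmf M)"
proof (rule finite_subset)
  show "featvec X T ` set_pmf M \<subseteq> PiE T (\<lambda>j. X j ` set_pmf M)"
    unfolding featvec_def by (rule image_subsetI, rule PiE_I) auto
  show "finite (PiE T (\<lambda>j. X j ` set_pmf M))"
    using assms by (intro finite_PiE)
qed

lemma featvec_eq_restrict:
  assumes "S \<subseteq> T"
  shows "featvec X S = (\<lambda>w. restrict (featvec X T w) S)"
  using assms by (intro ext) (auto simp: featvec_def restrict_def)

lemma DepS_mono:
  assumes "S \<subseteq> T" and "finite T" and "\<And>j. j \<in> T \<Longrightarrow> finite (X j ` set_pmf M)"
  shows "DepS M X S Y \<le> DepS M X T Y"
  unfolding DepS_def featvec_eq_restrict[OF assms(1)]
  by (intro Dep_comp_le finite_featvec_image assms(2,3))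

theorem mainTheorem6:
  fixes M :: "'w pmf" and X :: "nat \<Rightarrow> 'w \<Rightarrow> 'v" and Y :: "'w \<Rightarrow> 'y"
    and n i :: nat
  assumes "\<And>j. j \<in> {1..n} \<Longrightarrow> finite (X j ` set_pmf M)"
    and "finite (Y ` set_pmf M)"
    and "\<not> (\<exists>c. \<forall>w\<in>set_pmf M. Y w = c)"
    and "i \<in> {1..n}"
  shows "FI M n X Y i = 0 \<longleftrightarrow>
         (\<forall>S. S \<subseteq> {1..n} - {i} \<longrightarrow> DepS M X (S \<union> {i}) Y = DepS M X S Y)"
proof -
  let ?weight = "\<lambda>S. fact (card S) * fact (n - card S - 1) / fact n :: real"
  let ?gain = "\<lambda>S. DepS M X (S \<union> {i}) Y - DepS M X S Y"
  have gain_nonneg: "?gain S \<ge> 0" if "S \<in> Pow ({1..n} - {i})" for S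
  proof -
    have "S \<union> {i} \<subseteq> {1..n}"
      using that assms(4) by auto
    then have "DepS M X S Y \<le> DepS M X (S \<union> {i}) Y"
      using assms(1) by (intro DepS_mono) (auto intro: finite_subset)
    then show ?thesis by simp
  qed
  have weight_pos: "?weight S > 0" for S
    by simp
  have term_nonneg: "?weight S * ?gain S \<ge> 0" if "S \<in> Pow ({1..n} - {i})" for S
    using gain_nonneg[OF that] weight_pos[of S] by (intro mult_nonneg_nonneg) auto
  have "FI M n X Y i = 0 \<longleftrightarrow> (\<forall>S\<in>Pow ({1..n} - {i}). ?weight S * ?gain S = 0)"
    unfolding FI_def
    by (rule sum_nonneg_eq_0_iff[OF _ term_nonneg]) simp_all
  also have "\<dots> \<longleftrightarrow> (\<forall>S. S \<subseteq> {1..n} - {i} \<longrightarrow> DepS M X (S \<union> {i}) Y = DepS M X S Y)"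
    using weight_pos by (auto simp: less_irrefl)
  finally show ?thesis .
qed

end
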